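(* The Lie algebra $(\mathcal{APT},\llbracket\cdot,\cdot\rrbracket)$, where $\llbracket X,Y\rrbracket=X\rhd Y-Y\rhd X+[X,Y]$, is a post-Lie-Rinehart algebra over $S(\mathcal{PA})$ with anchor map $\rho$ and connection $\rhd$.
   Context: Work over a fixed ground field. A planar rooted tree is a finite rooted tree, with edges oriented away from the root, together with a total order on the outgoing edges of each vertex; $\mathcal{PT}$ is the span of isomorphism classes of planar rooted trees. $\mathrm{Lie}(\mathcal{PT})$ is the free Lie algebra on $\mathcal{PT}$, with bracket $[\cdot,\cdot]$. For planar trees, $t_1\rhd t_2$ is the sum, over vertices $v$ of $t_2$, of the tree obtained by adding an edge from $v$ to the root of $t_1$ as the leftmost outgoing edge of $v$. It is extended to $\mathrm{Lie}(\mathcal{PT})$ by \[ t_1\rhd[t_2,t_3]=[t_1\rhd t_2,t_3]+[t_2,t_1\rhd t_3], \] \[ [t_1,t_2]\rhd t_3=t_1\rhd(t_2\rhd t_3)-(t_1\rhd t_2)\rhd t_3-t_2\rhd(t_1\rhd t_3)+(t_2\rhd t_1)\rhd t_3. \] A planar aroma is an isomorphism class of finite connected directed graphs (loops allowed) in which each vertex has exactly one incoming edge, with a total order on the outgoing edges at each vertex. $\mathcal{PA}$ is their span and $S(\mathcal{PA})$ is the symmetric algebra. For a planar tree $t$ and a monomial $\alpha\in S(\mathcal{PA})$, $\rho(t)(\alpha)$ is the sum, over all vertices $v$ of all factors of $\alpha$, of the result of adding an edge from $v$ to the root of $t$ as the leftmost outgoing edge of $v$. For Lie polynomials, \[ \rho([t_1,t_2])=\rho(t_1)\rho(t_2)-\rho(t_1\rhd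 t_2)-\rho(t_2)\rho(t_1)+\rho(t_2\rhd t_1). \] Let $\mathcal{APT}=S(\mathcal{PA})\otimes\mathrm{Lie}(\mathcal{PT})$, with elements written $\alpha t$, and define: - $\rho(\alpha t)=\alpha\rho(t)$; - $[\alpha_1t_1,\alpha_2t_2]=\alpha_1\alpha_2[t_1,t_2]$; - $\alpha_1t_1\rhd\alpha_2t_2=\alpha_1\rho(t_1)(\alpha_2)t_2+\alpha_1\alpha_2(t_1\rhd t_2)$. A Lie-Rinehart algebra over a commutative unital algebra $R$ is an $R$-module $L$ with a Lie bracket $\llbracket\cdot,\cdot\rrbracket$ and an $R$-linear Lie morphism $\rho:L\to\mathrm{Der}(R)$ such that $\llbracket X,fY\rrbracket=(\rho(X)f)Y+f\llbracket X,Y\rrbracket$. A connection is a map $(X,Y)\mapsto X\rhd Y$ that is $R$-linear in $X$ and satisfies $X\rhd(fY)=(\rho(X)f)Y+fX\rhd Y$. Its torsion is $T(X,Y)=X\rhd Y-Y\rhd X-\llbracket X,Y\rrbracket$ and its curvature is $\mathcal{R}(X,Y,Z)=X\rhd(Y\rhd Z)-Y\rhd(X\rhd Z)-\llbracket X,Y\rrbracket\rhd Z$. The connection is flat if $\mathcal{R}=0$, and has constant torsion if $X\rhd T(Y,Z)=T(X\rhd Y,Z)+T(Y,X\rhd Z)$ for all $X,Y,Z$. A post-Lie-Rinehart algebra is a Lie-Rinehart algebra endowed with a flat connection that has constant torsion. *)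

theory Defs
  imports Main "HOL-Library.Poly_Mapping" "HOL-Library.Multiset"
begin

definition sc :: "'k::comm_ring_1 \<Rightarrow> ('a \<Rightarrow>\<^sub>0 'k) \<Rightarrow> ('a \<Rightarrow>\<^sub>0 'k)" where
  "sc c q = (\<Sum>y\<in>Poly_Mapping.keys q. Poly_Mapping.single y (c * Poly_Mapping.lookup q y))"

definition lext :: "('a \<Rightarrow> ('b \<Rightarrow>\<^sub>0 'k::comm_ring_1)) \<Rightarrow> ('a \<Rightarrow>\<^sub>0 'k) \<Rightarrow> ('b \<Rightarrow>\<^sub>0 'k)" where
  "lext g p = (\<Sum>x\<in>Poly_Mapping.keys p. sc (Poly_Mapping.lookup p x) (g x))"

definition basis :: "'a \<Rightarrow> ('a \<Rightarrow>\<^sub>0 'k::comm_ring_1)" where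
  "basis x = Poly_Mapping.single x 1"

definition lc_of_list :: "'a list \<Rightarrow> ('a \<Rightarrow>\<^sub>0 'k::comm_ring_1)" where
  "lc_of_list xs = sum_list (map basis xs)"

text \<open>A planar rooted tree is a root together with the ordered list of its subtrees.
  Isomorphism classes of planar rooted trees are exactly the elements of this datatype.\<close>
datatype ptree = PNode "ptree list"

text \<open>graft t s: list (with multiplicity) of the trees obtained by adding an edge from a
  vertex v of s to the root of t as the leftmost outgoing edge of v, one for each vertex v.
  graftL t cs: the same for a forest cs (ordered list of trees), grafting on one vertex
  of one of the trees.\<close>
primrec graft :: "ptree \<Rightarrow> ptree \<Rightarrow> ptree list"
  and graftL :: "ptree \<Rightarrow> ptree list \<Rightarrow> ptree list list" where
  "graft t (PNode cs) = PNode (t # cs) # map PNode (graftL t cs)"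
| "graftL t [] = []"
| "graftL t (c # cs) = map (\<lambda>c'. c' # cs) (graft t c) @ map (\<lambda>cs'. c # cs') (graftL t cs)"

text \<open>A planar aroma is a connected graph in which every vertex has exactly one incoming edge;
  it consists of one oriented cycle with planar trees attached.  A cycle vertex is described by
  the pair (L, R) of the lists of subtrees to the left resp. right of its outgoing cycle edge.
  A raw aroma is the nonempty list of cycle vertices, read along the cycle; isomorphism classes
  are the classes of such lists modulo rotation.\<close>
type_synonym raw_aroma = "(ptree list \<times> ptree list) list"

typedef aroma = "{A :: raw_aroma set. \<exists>xs. xs \<noteq> [] \<and> A = range (\<lambda>n. rotate n xs)}"
  by (rule exI[of _ "range (\<lambda>n. rotate n [([], [])])"]) blast

definition aroma_of :: "raw_aroma \<Rightarrow> aroma" where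
  "aroma_of xs = Abs_aroma (range (\<lambda>n. rotate n xs))"

definition aroma_rep :: "aroma \<Rightarrow> raw_aroma" where
  "aroma_rep A = (SOME xs. xs \<in> Rep_aroma A)"

definition graft_raw :: "ptree \<Rightarrow> raw_aroma \<Rightarrow> raw_aroma list" where
  "graft_raw t xs = concat (map (\<lambda>i. case xs ! i of (l, r) \<Rightarrow>
       [xs[i := (t # l, r)]] @ map (\<lambda>l'. xs[i := (l', r)]) (graftL t l)
                             @ map (\<lambda>r'. xs[i := (l, r')]) (graftL t r)) [0..<length xs])"

definition graft_aroma :: "ptree \<Rightarrow> aroma \<Rightarrow> aroma list" where
  "graft_aroma t A = map aroma_of (graft_raw t (aroma_rep A))"

text \<open>Monomials of S(PA) are finite multisets of planar aromas; the poly_mapping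
  convolution product is the product of the polynomial algebra.\<close>
type_synonym 'k SPA = "aroma multiset \<Rightarrow>\<^sub>0 'k"

definition rho_mono :: "ptree \<Rightarrow> aroma multiset \<Rightarrow> 'k::comm_ring_1 SPA" where
  "rho_mono t m = sum_mset (image_mset (\<lambda>A. lc_of_list
        (map (\<lambda>B. m - {#A#} + {#B#}) (graft_aroma t A))) m)"

definition rho_tree :: "ptree \<Rightarrow> 'k::comm_ring_1 SPA \<Rightarrow> 'k SPA" where
  "rho_tree t = lext (rho_mono t)"

type_synonym 'k TPT = "ptree list \<Rightarrow>\<^sub>0 'k"

definition tmul :: "'k::comm_ring_1 TPT \<Rightarrow> 'k TPT \<Rightarrow> 'k TPT" where
  "tmul F G = lext (\<lambda>u. lext (\<lambda>v. basis (u @ v)) G) F"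

definition tbr :: "'k::comm_ring_1 TPT \<Rightarrow> 'k TPT \<Rightarrow> 'k TPT" where
  "tbr F G = tmul F G - tmul G F"

inductive_set lie_pt :: "'k::comm_ring_1 TPT set" where
  gen: "basis [t] \<in> lie_pt"
| add: "F \<in> lie_pt \<Longrightarrow> G \<in> lie_pt \<Longrightarrow> F + G \<in> lie_pt"
| smul: "F \<in> lie_pt \<Longrightarrow> sc c F \<in> lie_pt"
| br: "F \<in> lie_pt \<Longrightarrow> G \<in> lie_pt \<Longrightarrow> tbr F G \<in> lie_pt"

text \<open>t \<rhd> w for a tree t and a word w: t acts as a derivation (grafting on each letter).\<close>
definition dw :: "ptree \<Rightarrow> ptree list \<Rightarrow> 'k::comm_ring_1 TPT" where
  "dw t w = lc_of_list (concat (map (\<lambda>i. map (\<lambda>s. w[i := s]) (graft t (w ! i))) [0..<length w]))"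

definition dT :: "ptree \<Rightarrow> 'k::comm_ring_1 TPT \<Rightarrow> 'k TPT" where
  "dT t = lext (dw t)"

text \<open>Extension of \<rhd> in the first argument:
  (t w) \<rhd> F = t \<rhd> (w \<rhd> F) - (t \<rhd> w) \<rhd> F; on Lie polynomials this gives
  [x,y] \<rhd> F = x \<rhd> (y \<rhd> F) - (x \<rhd> y) \<rhd> F - y \<rhd> (x \<rhd> F) + (y \<rhd> x) \<rhd> F.\<close>
primrec actN :: "nat \<Rightarrow> ptree list \<Rightarrow> 'k::comm_ring_1 TPT \<Rightarrow> 'k TPT" where
  "actN 0 w F = F"
| "actN (Suc n) w F = (case w of [] \<Rightarrow> F
     | t # w' \<Rightarrow> dT t (actN n w' F) - lext (\<lambda>u. actN n u F) (dw t w'))"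

definition actT :: "'k::comm_ring_1 TPT \<Rightarrow> 'k TPT \<Rightarrow> 'k TPT" where
  "actT G F = lext (\<lambda>u. actN (length u) u F) G"

text \<open>Extension of \<rho> to words:
  \<rho>(t w) = \<rho>(t) \<rho>(w) - \<rho>(t \<rhd> w); on Lie polynomials this gives
  \<rho>([x,y]) = \<rho>(x)\<rho>(y) - \<rho>(x \<rhd> y) - \<rho>(y)\<rho>(x) + \<rho>(y \<rhd> x).\<close>
primrec rhoN :: "nat \<Rightarrow> ptree list \<Rightarrow> 'k::comm_ring_1 SPA \<Rightarrow> 'k SPA" where
  "rhoN 0 w f = f"
| "rhoN (Suc n) w f = (case w of [] \<Rightarrow> f
     | t # w' \<Rightarrow> rho_tree t (rhoN n w' f) - lext (\<lambda>u. rhoN n u f) (dw t w'))"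

definition rhoW :: "ptree list \<Rightarrow> 'k::comm_ring_1 SPA \<Rightarrow> 'k SPA" where
  "rhoW w = rhoN (length w) w"

text \<open>We realise S(PA) \<otimes> T(PT) as finitely supported functions on pairs (monomial, word);
  APT is the subspace S(PA) \<otimes> Lie(PT).\<close>
type_synonym 'k APTT = "(aroma multiset \<times> ptree list) \<Rightarrow>\<^sub>0 'k"

definition tens :: "'k::comm_ring_1 SPA \<Rightarrow> 'k TPT \<Rightarrow> 'k APTT" where
  "tens f G = lext (\<lambda>m. lext (\<lambda>w. basis (m, w)) G) f"

definition rmult :: "'k::comm_ring_1 SPA \<Rightarrow> 'k APTT \<Rightarrow> 'k APTT" where
  "rmult f X = lext (\<lambda>(a, w). tens (f * basis a) (basis w)) X"

inductive_set APT :: "'k::comm_ring_1 APTT set" where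
  zero: "0 \<in> APT"
| add: "X \<in> APT \<Longrightarrow> Y \<in> APT \<Longrightarrow> X + Y \<in> APT"
| gen: "F \<in> lie_pt \<Longrightarrow> tens \<alpha> F \<in> APT"

definition rhoAPT :: "'k::comm_ring_1 APTT \<Rightarrow> 'k SPA \<Rightarrow> 'k SPA" where
  "rhoAPT X f = lext (\<lambda>(a, w). basis a * rhoW w f) X"

definition brAPT :: "'k::comm_ring_1 APTT \<Rightarrow> 'k APTT \<Rightarrow> 'k APTT" where
  "brAPT X Y = lext (\<lambda>(a, u). lext (\<lambda>(b, v).
      tens (basis (a + b)) (tbr (basis u) (basis v))) Y) X"

definition triAPT :: "'k::comm_ring_1 APTT \<Rightarrow> 'k APTT \<Rightarrow> 'k APTT" where
  "triAPT X Y = lext (\<lambda>(a, u). lext (\<lambda>(b, v).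
      tens (basis a * rhoW u (basis b)) (basis v)
      + tens (basis (a + b)) (actT (basis u) (basis v))) Y) X"

definition dbrAPT :: "'k::comm_ring_1 APTT \<Rightarrow> 'k APTT \<Rightarrow> 'k APTT" where
  "dbrAPT X Y = triAPT X Y - triAPT Y X + brAPT X Y"

text \<open>R is a commutative algebra over the ground field (scalar action sR); L is a subset
  (carrier) of an abelian group with scalar action sL, R-action act, bracket br,
  anchor rho and connection tri.\<close>

definition is_derivation :: "('k \<Rightarrow> 'r \<Rightarrow> 'r) \<Rightarrow> ('r::comm_ring_1 \<Rightarrow> 'r) \<Rightarrow> bool" where
  "is_derivation sR D \<longleftrightarrow>
     (\<forall>f g. D (f + g) = D f + D g) \<and> (\<forall>c f. D (sR c f) = sR c (D f)) \<and>
     (\<forall>f g. D (f * g) = D f * g + f * D g)"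

definition lie_rinehart ::
  "('k \<Rightarrow> 'r \<Rightarrow> 'r) \<Rightarrow> 'l::ab_group_add set \<Rightarrow> ('k \<Rightarrow> 'l \<Rightarrow> 'l) \<Rightarrow> ('r \<Rightarrow> 'l \<Rightarrow> 'l)
   \<Rightarrow> ('l \<Rightarrow> 'l \<Rightarrow> 'l) \<Rightarrow> ('l \<Rightarrow> 'r \<Rightarrow> 'r::comm_ring_1) \<Rightarrow> bool" where
  "lie_rinehart sR L sL act br rho \<longleftrightarrow>
     \<comment> \<open>L is an R-module (compatible with the ground field)\<close>
     0 \<in> L \<and>
     (\<forall>X\<in>L. \<forall>Y\<in>L. X + Y \<in> L) \<and> (\<forall>X\<in>L. - X \<in> L) \<and>
     (\<forall>f. \<forall>X\<in>L. act f X \<in> L) \<and>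
     (\<forall>f g. \<forall>X\<in>L. act (f + g) X = act f X + act g X) \<and>
     (\<forall>f. \<forall>X\<in>L. \<forall>Y\<in>L. act f (X + Y) = act f X + act f Y) \<and>
     (\<forall>f g. \<forall>X\<in>L. act (f * g) X = act f (act g X)) \<and>
     (\<forall>X\<in>L. act 1 X = X) \<and>
     (\<forall>c. \<forall>X\<in>L. sL c X = act (sR c 1) X) \<and>
     \<comment> \<open>Lie bracket (bilinear over the ground field, alternating, Jacobi)\<close>
     (\<forall>X\<in>L. \<forall>Y\<in>L. br X Y \<in> L) \<and>
     (\<forall>X\<in>L. \<forall>Y\<in>L. \<forall>Z\<in>L. br (X + Y) Z = br X Z + br Y Z) \<and>
     (\<forall>X\<in>L. \<forall>Y\<in>L. \<forall>Z\<in>L. br X (Y + Z) = br X Y + br X Z) \<and>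
     (\<forall>c. \<forall>X\<in>L. \<forall>Y\<in>L. br (sL c X) Y = sL c (br X Y)) \<and>
     (\<forall>c. \<forall>X\<in>L. \<forall>Y\<in>L. br X (sL c Y) = sL c (br X Y)) \<and>
     (\<forall>X\<in>L. br X X = 0) \<and>
     (\<forall>X\<in>L. \<forall>Y\<in>L. \<forall>Z\<in>L. br X (br Y Z) + br Y (br Z X) + br Z (br X Y) = 0) \<and>
     \<comment> \<open>anchor: R-linear Lie morphism into Der(R)\<close>
     (\<forall>X\<in>L. is_derivation sR (rho X)) \<and>
     (\<forall>X\<in>L. \<forall>Y\<in>L. rho (X + Y) = (\<lambda>g. rho X g + rho Y g)) \<and>
     (\<forall>f. \<forall>X\<in>L. rho (act f X) = (\<lambda>g. f * rho X g)) \<and>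
     (\<forall>X\<in>L. \<forall>Y\<in>L. rho (br X Y) = (\<lambda>g. rho X (rho Y g) - rho Y (rho X g))) \<and>
     \<comment> \<open>Leibniz rule\<close>
     (\<forall>f. \<forall>X\<in>L. \<forall>Y\<in>L. br X (act f Y) = act (rho X f) Y + act f (br X Y))"

definition is_connection ::
  "'l set \<Rightarrow> ('r \<Rightarrow> 'l \<Rightarrow> 'l) \<Rightarrow> ('l \<Rightarrow> 'r \<Rightarrow> 'r::comm_ring_1) \<Rightarrow> ('l::ab_group_add \<Rightarrow> 'l \<Rightarrow> 'l) \<Rightarrow> bool" where
  "is_connection L act rho tri \<longleftrightarrow>
     (\<forall>X\<in>L. \<forall>Y\<in>L. tri X Y \<in> L) \<and>
     (\<forall>X\<in>L. \<forall>X'\<in>L. \<forall>Y\<in>L. tri (X + X') Y = tri X Y + tri X' Y) \<and>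
     (\<forall>f. \<forall>X\<in>L. \<forall>Y\<in>L. tri (act f X) Y = act f (tri X Y)) \<and>
     (\<forall>X\<in>L. \<forall>Y\<in>L. \<forall>Y'\<in>L. tri X (Y + Y') = tri X Y + tri X Y') \<and>
     (\<forall>f. \<forall>X\<in>L. \<forall>Y\<in>L. tri X (act f Y) = act (rho X f) Y + act f (tri X Y))"

definition torsion :: "('l \<Rightarrow> 'l \<Rightarrow> 'l) \<Rightarrow> ('l \<Rightarrow> 'l \<Rightarrow> 'l) \<Rightarrow> 'l \<Rightarrow> 'l \<Rightarrow> 'l::ab_group_add" where
  "torsion br tri X Y = tri X Y - tri Y X - br X Y"

definition curvature :: "('l \<Rightarrow> 'l \<Rightarrow> 'l) \<Rightarrow> ('l \<Rightarrow> 'l \<Rightarrow> 'l) \<Rightarrow> 'l \<Rightarrow> 'l \<Rightarrow> 'l \<Rightarrow> 'l::ab_group_add" where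
  "curvature br tri X Y Z = tri X (tri Y Z) - tri Y (tri X Z) - tri (br X Y) Z"

definition post_lie_rinehart ::
  "('k \<Rightarrow> 'r \<Rightarrow> 'r) \<Rightarrow> 'l set \<Rightarrow> ('k \<Rightarrow> 'l \<Rightarrow> 'l) \<Rightarrow> ('r \<Rightarrow> 'l \<Rightarrow> 'l)
   \<Rightarrow> ('l \<Rightarrow> 'l \<Rightarrow> 'l) \<Rightarrow> ('l \<Rightarrow> 'r \<Rightarrow> 'r::comm_ring_1) \<Rightarrow> ('l::ab_group_add \<Rightarrow> 'l \<Rightarrow> 'l) \<Rightarrow> bool" where
  "post_lie_rinehart sR L sL act br rho tri \<longleftrightarrow>
     lie_rinehart sR L sL act br rho \<and> is_connection L act rho tri \<and>
     (\<forall>X\<in>L. \<forall>Y\<in>L. \<forall>Z\<in>L. curvature br tri X Y Z = 0) \<and>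
     (\<forall>X\<in>L. \<forall>Y\<in>L. \<forall>Z\<in>L.
        tri X (torsion br tri Y Z) = torsion br tri (tri X Y) Z + torsion br tri Y (tri X Z))"

end

theory Submission
  imports Defs
begin

text \<open>All operations are multilinear, so each axiom reduces to pure tensors \<open>\<alpha> F\<close> with \<open>F\<close>
  a Lie polynomial in planar trees.  There everything follows from the fact that such an \<open>F\<close>
  acts like a primitive element: \<open>F \<rhd> -\<close> is a derivation of the concatenation product
  preserving homogeneous Lie polynomials and their degree (so \<open>Lie(PT)\<close> is closed under
  \<open>\<rhd>\<close>), \<open>\<rho>(F)\<close> is a derivation of \<open>S(PA)\<close>, and the composition laws
  \<open>(F V) \<rhd> X = F \<rhd> (V \<rhd> X) - (F \<rhd> V) \<rhd> X\<close> and \<open>\<rho>(F V) = \<rho>(F) \<rho>(V) - \<rho>(F \<rhd> V)\<close> hold.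
  For a tree the composition laws are the recursion defining the extension to words, and the
  derivation properties hold because grafting onto a word or onto a monomial of aromas grafts
  onto one letter or one factor at a time.  All properties pass to brackets by induction on the
  degree, since \<open>[G, H]\<close> only needs them for \<open>G\<close>, \<open>H\<close>, \<open>G \<rhd> H\<close> and \<open>H \<rhd> G\<close>, whose degrees are
  smaller.  Flatness, the Leibniz rules and constant torsion are then direct computations on
  pure tensors, and the Jacobi identity for \<open>\<lbrakk>\<cdot>,\<cdot>\<rbrakk>\<close> follows from flatness, from \<open>\<rhd>\<close> being a
  derivation of \<open>[\<cdot>,\<cdot>]\<close> and from the Jacobi identity for \<open>[\<cdot>,\<cdot>]\<close>.\<close>

lemma lookup_sc [simp]: "Poly_Mapping.lookup (sc c q) y = c * Poly_Mapping.lookup q y"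
proof -
  have "Poly_Mapping.lookup (sc c q) y =
        (\<Sum>x\<in>Poly_Mapping.keys q. Poly_Mapping.lookup (Poly_Mapping.single x (c * Poly_Mapping.lookup q x)) y)"
    by (simp add: sc_def lookup_sum)
  also have "\<dots> = (\<Sum>x\<in>Poly_Mapping.keys q. if x = y then c * Poly_Mapping.lookup q y else 0)"
    by (rule sum.cong) (auto simp: lookup_single)
  also have "\<dots> = c * Poly_Mapping.lookup q y"
    by (auto simp: in_keys_iff)
  finally show ?thesis .
qed

lemma sc_add_right [simp]: "sc c (p + q) = sc c p + sc c q"
  by (rule poly_mapping_eqI) (simp add: lookup_add algebra_simps)

lemma sc_add_left: "sc (c + d) q = sc c q + sc d q"
  by (rule poly_mapping_eqI) (simp add: lookup_add algebra_simps)

lemma sc_sc [simp]: "sc c (sc d q) = sc (c * d) q"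
  by (rule poly_mapping_eqI) (simp add: algebra_simps)

lemma sc_one [simp]: "sc 1 q = q"
  by (rule poly_mapping_eqI) simp

lemma sc_zero_left [simp]: "sc 0 q = 0"
  by (rule poly_mapping_eqI) simp

lemma sc_zero_right [simp]: "sc c 0 = 0"
  by (rule poly_mapping_eqI) simp

lemma sc_minus_right [simp]: "sc c (- q) = - sc c q"
  by (rule poly_mapping_eqI) simp

lemma sc_diff_right [simp]: "sc c (p - q) = sc c p - sc c q"
  by (rule poly_mapping_eqI) (simp add: lookup_minus algebra_simps)

lemma sc_minus_left: "sc (- c) q = - sc c q"
  by (rule poly_mapping_eqI) simp

lemma sc_single: "sc c (Poly_Mapping.single x d) = Poly_Mapping.single x (c * d)"
  by (rule poly_mapping_eqI) (simp add: lookup_single when_def)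

lemma single_eq_sc_basis: "Poly_Mapping.single x c = sc c (basis x)"
  by (simp add: basis_def sc_single)

lemma sc_conv_mult: "sc c (q :: 'a::monoid_add \<Rightarrow>\<^sub>0 'k::comm_ring_1) = Poly_Mapping.single 0 c * q"
proof -
  have "sc c q = Poly_Mapping.map ((*) c) q"
    by (rule poly_mapping_eqI) (simp add: Poly_Mapping.map.rep_eq when_def)
  then show ?thesis by (simp add: mult_map_scale_conv_mult)
qed

lemma sc_mult_left [simp]: "sc c (p :: 'a::comm_monoid_add \<Rightarrow>\<^sub>0 'k::comm_ring_1) * q = sc c (p * q)"
  by (simp add: sc_conv_mult mult.assoc)

lemma sc_mult_right [simp]: "p * sc c (q :: 'a::comm_monoid_add \<Rightarrow>\<^sub>0 'k::comm_ring_1) = sc c (p * q)"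
  by (simp add: sc_conv_mult mult.left_commute)

lemma basis_mult_basis [simp]: "(basis a :: 'a::comm_monoid_add \<Rightarrow>\<^sub>0 'k::comm_ring_1) * basis b = basis (a + b)"
  by (simp add: basis_def mult_single)

lemma poly_mapping_induct_single [case_names zero add]:
  assumes "P 0" and "\<And>p x c. P p \<Longrightarrow> P (Poly_Mapping.single x c + p)"
  shows "P q"
proof (induction q rule: update_induct)
  case const
  then show ?case using assms(1) .
next
  case (update f a b)
  have "Poly_Mapping.update a b f = Poly_Mapping.single a b + f"
    using update(1)
    by (intro poly_mapping_eqI) (auto simp: lookup_update lookup_add lookup_single when_def in_keys_iff)
  then show ?case using assms(2) update by simp
qed

lemma lext_zero [simp]: "lext g 0 = 0"
  by (simp add: lext_def)

lemma lext_add [simp]: "lext g (p + q) = lext g p + lext g q"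
  unfolding lext_def by (rule setsum_keys_plus_distrib) (simp_all add: sc_add_left)

lemma lext_single [simp]: "lext g (Poly_Mapping.single x c) = sc c (g x)"
  by (simp add: lext_def)

lemma lext_basis [simp]: "lext g (basis x) = g x"
  by (simp add: basis_def)

lemma lext_sc [simp]: "lext g (sc c p) = sc c (lext g p)"
  by (induction p rule: poly_mapping_induct_single) (simp_all add: sc_single)

lemma lext_minus [simp]: "lext g (- p) = - lext g p"
  using lext_add[of g p "- p"] by (simp add: add_eq_0_iff2)

lemma lext_diff [simp]: "lext g (p - q) = lext g p - lext g q"
  using lext_add[of g p "- q"] by simp

lemma lext_cong: "(\<And>x. x \<in> Poly_Mapping.keys p \<Longrightarrow> g x = h x) \<Longrightarrow> lext g p = lext h p"
  by (simp add: lext_def)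

lemma lext_fun_add: "lext (\<lambda>x. g x + h x) p = lext g p + lext h p"
  by (induction p rule: poly_mapping_induct_single) simp_all

lemma lext_fun_zero [simp]: "lext (\<lambda>x. 0) p = 0"
  by (induction p rule: poly_mapping_induct_single) simp_all

lemma lext_fun_diff: "lext (\<lambda>x. g x - h x) p = lext g p - lext h p"
  by (induction p rule: poly_mapping_induct_single) (simp_all add: algebra_simps)

lemma lext_fun_sc: "lext (\<lambda>x. sc c (g x)) p = sc c (lext g p)"
  by (induction p rule: poly_mapping_induct_single) (simp_all add: mult.commute)

lemma lext_basis_id [simp]: "lext basis p = p"
  by (induction p rule: poly_mapping_induct_single) (simp_all add: single_eq_sc_basis)

lemma lext_lext: "lext g (lext h p) = lext (\<lambda>x. lext g (h x)) p"
  by (induction p rule: poly_mapping_induct_single) simp_all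

definition lin :: "(('a \<Rightarrow>\<^sub>0 'k::comm_ring_1) \<Rightarrow> ('b \<Rightarrow>\<^sub>0 'k)) \<Rightarrow> bool" where
  "lin L \<longleftrightarrow> (\<forall>p q. L (p + q) = L p + L q) \<and> (\<forall>c p. L (sc c p) = sc c (L p))"

lemma linI: "(\<And>p q. L (p + q) = L p + L q) \<Longrightarrow> (\<And>c p. L (sc c p) = sc c (L p)) \<Longrightarrow> lin L"
  by (simp add: lin_def)

lemma lin_add: "lin L \<Longrightarrow> L (p + q) = L p + L q"
  by (simp add: lin_def)

lemma lin_sc: "lin L \<Longrightarrow> L (sc c p) = sc c (L p)"
  by (simp add: lin_def)

lemma lin_zero: "lin L \<Longrightarrow> L 0 = 0"
  using lin_sc[of L 0 0] by simp

lemma lin_minus: "lin L \<Longrightarrow> L (- p) = - L p"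
  using lin_sc[of L "-1" p] by (simp add: sc_minus_left)

lemma lin_diff: "lin L \<Longrightarrow> L (p - q) = L p - L q"
  using lin_add[of L p "- q"] lin_minus[of L q] by simp

lemma lin_lext [simp]: "lin (lext g)"
  by (rule linI) simp_all

lemma lin_eq_lext: "lin L \<Longrightarrow> L p = lext (\<lambda>x. L (basis x)) p"
  by (induction p rule: poly_mapping_induct_single)
     (simp_all add: lin_zero lin_add lin_sc single_eq_sc_basis del: lext_single)

lemma lin_eq:
  assumes "lin L" "lin M" "\<And>x. L (basis x) = M (basis x)"
  shows "L p = M p"
proof -
  have "(\<lambda>x. L (basis x)) = (\<lambda>x. M (basis x))"
    using assms(3) by (rule ext)
  then show ?thesis
    by (simp only: lin_eq_lext[OF assms(1), of p] lin_eq_lext[OF assms(2), of p])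
qed

lemma bilin_eq:
  assumes "\<And>y. lin (\<lambda>x. P x y)" "\<And>x. lin (P x)" "\<And>y. lin (\<lambda>x. Q x y)" "\<And>x. lin (Q x)"
    and "\<And>a b. P (basis a) (basis b) = Q (basis a) (basis b)"
  shows "P x y = Q x y"
proof -
  have "P (basis a) y = Q (basis a) y" for a
    using assms(2,4,5) by (rule lin_eq)
  then show ?thesis
    by (rule lin_eq[OF assms(1) assms(3)])
qed

lemma lc_of_list_simps [simp]:
  "lc_of_list [] = 0" "lc_of_list (x # xs) = basis x + lc_of_list xs"
  "lc_of_list (xs @ ys) = lc_of_list xs + lc_of_list ys"
  by (simp_all add: lc_of_list_def)

lemma lext_lc_of_list [simp]: "lext g (lc_of_list xs) = sum_list (map g xs)"
  by (induction xs) simp_all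

lemma keys_lc_of_list: "Poly_Mapping.keys (lc_of_list xs :: 'a \<Rightarrow>\<^sub>0 'k::comm_ring_1) \<subseteq> set xs"
proof (induction xs)
  case (Cons x xs)
  have "Poly_Mapping.keys (basis x :: 'a \<Rightarrow>\<^sub>0 'k) \<subseteq> {x}"
    by (simp add: basis_def)
  then show ?case
    using Cons keys_add[of "basis x :: 'a \<Rightarrow>\<^sub>0 'k" "lc_of_list xs"] by auto
qed simp

section \<open>Grafting on words\<close>

lemma tmul_basis [simp]: "tmul (basis u) (basis v) = basis (u @ v)"
  by (simp add: tmul_def)

lemma tmul_add_left [simp]: "tmul (F + G) H = tmul F H + tmul G H"
  by (simp add: tmul_def)

lemma tmul_add_right [simp]: "tmul F (G + H) = tmul F G + tmul F H"
  by (simp add: tmul_def lext_fun_add)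

lemma tmul_sc_left [simp]: "tmul (sc c F) H = sc c (tmul F H)"
  by (simp add: tmul_def)

lemma tmul_sc_right [simp]: "tmul F (sc c H) = sc c (tmul F H)"
  by (simp add: tmul_def lext_fun_sc)

lemma tmul_zero_left [simp]: "tmul 0 H = 0"
  by (simp add: tmul_def)

lemma tmul_zero_right [simp]: "tmul F 0 = 0"
  by (simp add: tmul_def)

lemma tmul_diff_left [simp]: "tmul (F - G) H = tmul F H - tmul G H"
  by (simp add: tmul_def)

lemma tmul_diff_right [simp]: "tmul F (G - H) = tmul F G - tmul F H"
  by (simp add: tmul_def lext_fun_diff)

lemma tmul_Nil_left [simp]: "tmul (basis []) F = F"
  by (simp add: tmul_def)

lemma tmul_assoc: "tmul (tmul F G) H = tmul F (tmul G H)"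
  by (simp add: tmul_def lext_lext)

lemma tbr_add_left [simp]: "tbr (F + G) H = tbr F H + tbr G H"
  by (simp add: tbr_def)

lemma tbr_add_right [simp]: "tbr F (G + H) = tbr F G + tbr F H"
  by (simp add: tbr_def)

lemma tbr_sc_left [simp]: "tbr (sc c F) H = sc c (tbr F H)"
  by (simp add: tbr_def)

lemma tbr_sc_right [simp]: "tbr F (sc c H) = sc c (tbr F H)"
  by (simp add: tbr_def)

lemma tbr_zero_left [simp]: "tbr 0 H = 0"
  by (simp add: tbr_def)

lemma tbr_zero_right [simp]: "tbr F 0 = 0"
  by (simp add: tbr_def)

definition tmul_derivation :: "('k::comm_ring_1 TPT \<Rightarrow> 'k TPT) \<Rightarrow> bool" where
  "tmul_derivation D \<longleftrightarrow> (\<forall>U V. D (tmul U V) = tmul (D U) V + tmul U (D V))"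

lemma tmul_derivation_tbr:
  "lin D \<Longrightarrow> tmul_derivation D \<Longrightarrow> D (tbr U V) = tbr (D U) V + tbr U (D V)"
  by (simp add: tmul_derivation_def tbr_def lin_diff)

lemma lc_of_list_map_Cons: "lc_of_list (map (\<lambda>w. x # w) ws) = tmul (basis [x]) (lc_of_list ws)"
  by (induction ws) simp_all

lemma lc_of_list_map_singleton_Cons:
  "lc_of_list (map (\<lambda>s. s # w) ss) = tmul (lc_of_list (map (\<lambda>s. [s]) ss)) (basis w)"
  by (induction ss) simp_all

lemma dw_Nil [simp]: "dw t [] = 0"
  by (simp add: dw_def)

lemma dw_singleton: "dw t [x] = lc_of_list (map (\<lambda>s. [s]) (graft t x))"
  by (simp add: dw_def)

lemma dw_Cons: "dw t (x # w) = tmul (dw t [x]) (basis w) + tmul (basis [x]) (dw t w)"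
proof -
  have upt: "[0..<length (x # w)] = 0 # map Suc [0..<length w]"
    by (simp only: length_Cons map_Suc_upt) (rule upt_conv_Cons, simp)
  have update_0: "list_update (x # w) 0 = (\<lambda>s. s # w)"
    and update_Suc: "list_update (x # w) (Suc i) = (\<lambda>s. x # w[i := s])" for i
    by (rule ext, simp)+
  have "dw t (x # w) = lc_of_list (map (\<lambda>s. s # w) (graft t x)) +
     lc_of_list (concat (map (\<lambda>i. map (\<lambda>s. x # w[i := s]) (graft t (w ! i))) [0..<length w]))"
    unfolding dw_def upt by (simp add: comp_def update_0 update_Suc)
  also have "lc_of_list (concat (map (\<lambda>i. map (\<lambda>s. x # w[i := s]) (graft t (w ! i))) [0..<length w]))
     = tmul (basis [x]) (dw t w)"
    unfolding dw_def lc_of_list_map_Cons[symmetric] by (simp add: map_concat comp_def)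
  finally show ?thesis
    by (simp only: lc_of_list_map_singleton_Cons[of w] dw_singleton)
qed

lemma dw_append: "dw t (u @ v) = tmul (dw t u) (basis v) + tmul (basis u) (dw t v)"
proof (induction u)
  case (Cons x u)
  have "tmul (basis [x]) (tmul (basis u) F) = tmul (basis (x # u)) F" for F
    by (simp add: tmul_assoc[symmetric])
  then show ?case
    unfolding append_Cons dw_Cons[of t x "u @ v"] dw_Cons[of t x u] Cons.IH
    by (simp add: tmul_assoc)
qed simp

lemma keys_dw: "u \<in> Poly_Mapping.keys (dw t w) \<Longrightarrow> length u = length w"
  unfolding dw_def using keys_lc_of_list by fastforce

lemma dT_basis [simp]: "dT t (basis u) = dw t u"
  by (simp add: dT_def)

lemma lin_dT: "lin (dT t)"
  by (simp add: dT_def)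

lemma dT_add [simp]: "dT t (F + G) = dT t F + dT t G"
  by (simp add: dT_def)

lemma dT_sc [simp]: "dT t (sc c F) = sc c (dT t F)"
  by (simp add: dT_def)

lemma tmul_derivation_dT: "tmul_derivation (dT t)"
  unfolding tmul_derivation_def
proof (intro allI)
  fix F G :: "'k::comm_ring_1 TPT"
  show "dT t (tmul F G) = tmul (dT t F) G + tmul F (dT t G)"
    by (rule bilin_eq[of "\<lambda>F G. dT t (tmul F G)" "\<lambda>F G. tmul (dT t F) G + tmul F (dT t G)"])
       ((rule linI; simp)+, simp add: dw_append)
qed

section \<open>Extending the action of trees to words\<close>

text \<open>Both \<open>\<rhd>\<close> and \<open>\<rho>\<close> are extended from trees to words \<open>t w\<close> by the same recursion
  \<open>\<Phi>(t w) = \<Phi>(t) \<Phi>(w) - \<Phi>(t \<rhd> w)\<close>, written with a fuel argument as in \<^const>\<open>actN\<close>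
  and \<^const>\<open>rhoN\<close>.  The fuel \<open>length u\<close> suffices because grafting preserves the
  length of words.\<close>

locale word_extension =
  fixes \<delta> :: "ptree \<Rightarrow> ('a \<Rightarrow>\<^sub>0 'k::comm_ring_1) \<Rightarrow> ('a \<Rightarrow>\<^sub>0 'k)"
    and N :: "nat \<Rightarrow> ptree list \<Rightarrow> ('a \<Rightarrow>\<^sub>0 'k) \<Rightarrow> ('a \<Rightarrow>\<^sub>0 'k)"
  assumes lin_\<delta>: "lin (\<delta> t)"
    and N_0: "N 0 w f = f"
    and N_Suc: "N (Suc n) w f = (case w of [] \<Rightarrow> f
          | t # w' \<Rightarrow> \<delta> t (N n w' f) - lext (\<lambda>u. N n u f) (dw t w'))"
begin

lemma lin_N: "lin (N n w)"
proof (induction n arbitrary: w)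
  case 0
  show ?case by (rule linI) (simp_all add: N_0)
next
  case (Suc n)
  show ?case
    by (rule linI)
       (simp_all add: N_Suc lin_add[OF Suc] lin_sc[OF Suc] lin_add[OF lin_\<delta>] lin_sc[OF lin_\<delta>]
         lext_fun_add lext_fun_sc split: list.split)
qed

definition word_ext :: "ptree list \<Rightarrow> ('a \<Rightarrow>\<^sub>0 'k) \<Rightarrow> ('a \<Rightarrow>\<^sub>0 'k)" where
  "word_ext u f = N (length u) u f"

lemma lin_word_ext: "lin (word_ext u)"
  unfolding word_ext_def by (rule lin_N)

lemma word_ext_Nil [simp]: "word_ext [] f = f"
  by (simp add: word_ext_def N_0)

lemma word_ext_Cons: "word_ext (t # w) f = \<delta> t (word_ext w f) - lext (\<lambda>u. word_ext u f) (dw t w)"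
proof -
  have "lext (\<lambda>u. N (length w) u f) (dw t w) = lext (\<lambda>u. word_ext u f) (dw t w)"
    by (rule lext_cong) (simp add: word_ext_def keys_dw)
  then show ?thesis by (simp add: word_ext_def N_Suc)
qed

lemma word_ext_singleton [simp]: "word_ext [t] f = \<delta> t f"
  by (simp add: word_ext_Cons)

definition ext :: "'k TPT \<Rightarrow> ('a \<Rightarrow>\<^sub>0 'k) \<Rightarrow> ('a \<Rightarrow>\<^sub>0 'k)" where
  "ext G f = lext (\<lambda>u. word_ext u f) G"

lemma ext_basis [simp]: "ext (basis u) f = word_ext u f"
  by (simp add: ext_def)

lemma ext_add_left [simp]: "ext (G + H) f = ext G f + ext H f"
  by (simp add: ext_def)

lemma ext_sc_left [simp]: "ext (sc c G) f = sc c (ext G f)"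
  by (simp add: ext_def)

lemma ext_zero_left [simp]: "ext 0 f = 0"
  by (simp add: ext_def)

lemma ext_diff_left [simp]: "ext (G - H) f = ext G f - ext H f"
  by (simp add: ext_def)

lemma lin_ext: "lin (ext G)"
  by (rule linI)
     (simp_all add: ext_def lin_add[OF lin_word_ext] lin_sc[OF lin_word_ext] lext_fun_add lext_fun_sc)

lemma ext_add_right [simp]: "ext G (p + q) = ext G p + ext G q"
  by (rule lin_add[OF lin_ext])

lemma ext_sc_right [simp]: "ext G (sc c p) = sc c (ext G p)"
  by (rule lin_sc[OF lin_ext])

lemma ext_zero_right [simp]: "ext G 0 = 0"
  by (rule lin_zero[OF lin_ext])

lemma ext_diff_right [simp]: "ext G (p - q) = ext G p - ext G q"
  by (rule lin_diff[OF lin_ext])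

lemma ext_tmul_tree: "ext (tmul (basis [t]) V) f = \<delta> t (ext V f) - ext (dT t V) f"
proof (rule lin_eq[of "\<lambda>V. ext (tmul (basis [t]) V) f" "\<lambda>V. \<delta> t (ext V f) - ext (dT t V) f"])
  show "lin (\<lambda>V. ext (tmul (basis [t]) V) f)"
    by (rule linI) simp_all
  show "lin (\<lambda>V. \<delta> t (ext V f) - ext (dT t V) f)"
    by (rule linI) (simp_all add: lin_add[OF lin_\<delta>] lin_sc[OF lin_\<delta>] algebra_simps)
qed (simp add: word_ext_Cons ext_def)

definition composes :: "'k TPT \<Rightarrow> bool" where
  "composes G \<longleftrightarrow> (\<forall>V f. ext (tmul G V) f = ext G (ext V f) - ext (actT G V) f)"

lemma ext_tbr:
  assumes "composes H" "composes K"
  shows "ext (tbr H K) f = ext H (ext K f) - ext (actT H K) f - ext K (ext H f) + ext (actT K H) f"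
  using assms by (simp add: composes_def tbr_def)

end

definition rhoT :: "'k::comm_ring_1 TPT \<Rightarrow> 'k SPA \<Rightarrow> 'k SPA" where
  "rhoT G f = lext (\<lambda>u. rhoW u f) G"

interpretation A: word_extension dT actN
  rewrites "word_extension.ext actN = actT"
proof -
  show inst: "word_extension dT actN"
    by unfold_locales (simp_all add: lin_dT)
  show "word_extension.ext actN = actT"
    by (intro ext) (simp add: word_extension.ext_def[OF inst] word_extension.word_ext_def[OF inst] actT_def)
qed

interpretation R: word_extension rho_tree rhoN
  rewrites "word_extension.word_ext rhoN = rhoW" and "word_extension.ext rhoN = rhoT"
proof -
  show inst: "word_extension rho_tree rhoN"
    by unfold_locales (simp_all add: rho_tree_def)
  show word: "word_extension.word_ext rhoN = rhoW"
    by (intro ext) (simp add: word_extension.word_ext_def[OF inst] rhoW_def)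
  show "word_extension.ext rhoN = rhoT"
    by (intro ext) (simp add: word_extension.ext_def[OF inst] word rhoT_def)
qed

context word_extension
begin

lemma composes_tbr:
  assumes "composes H" "composes K" "composes (actT H K)" "composes (actT K H)"
    and "A.composes H" "A.composes K"
    and "tmul_derivation (actT H)" "tmul_derivation (actT K)"
  shows "composes (tbr H K)"
  unfolding composes_def
proof (intro allI)
  fix V f
  note comp = assms(1-4)[unfolded composes_def, rule_format]
  note der = assms(7,8)[unfolded tmul_derivation_def, rule_format]
  have "ext (tmul (tbr H K) V) f = ext (tmul H (tmul K V)) f - ext (tmul K (tmul H V)) f"
    by (simp add: tbr_def tmul_assoc)
  also have "\<dots> = ext H (ext K (ext V f)) - ext H (ext (actT K V) f)
      - ext (actT H K) (ext V f) + ext (actT (actT H K) V) f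
      - ext K (ext (actT H V) f) + ext (actT K (actT H V)) f
      - (ext K (ext H (ext V f)) - ext K (ext (actT H V) f)
      - ext (actT K H) (ext V f) + ext (actT (actT K H) V) f
      - ext H (ext (actT K V) f) + ext (actT H (actT K V)) f)"
    by (simp add: comp der)
  also have "\<dots> = ext (tbr H K) (ext V f) - ext (actT (tbr H K) V) f"
    by (simp only: A.ext_tbr[OF assms(5,6)] ext_tbr[OF assms(1,2)]) (simp add: algebra_simps)
  finally show "ext (tmul (tbr H K) V) f = ext (tbr H K) (ext V f) - ext (actT (tbr H K) V) f" .
qed

end

lemma lc_of_list_map_add_basis:
  "lc_of_list (map (\<lambda>B. k B + m) L) = lc_of_list (map k L) * (basis m :: 'a::comm_monoid_add \<Rightarrow>\<^sub>0 'k::comm_ring_1)"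
  by (induction L) (simp_all add: distrib_right)

lemma rho_mono_add:
  "(rho_mono t (m1 + m2) :: 'k::comm_ring_1 SPA) = rho_mono t m1 * basis m2 + basis m1 * rho_mono t m2"
proof -
  define graft_factor :: "aroma multiset \<Rightarrow> aroma \<Rightarrow> 'k SPA" where
    "graft_factor m A = lc_of_list (map (\<lambda>B. m - {#A#} + {#B#}) (graft_aroma t A))" for m A
  have rho_mono_eq: "rho_mono t m = (\<Sum>A\<in>#m. graft_factor m A)" for m
    by (simp add: rho_mono_def graft_factor_def)
  have left: "graft_factor (m1 + m2) A = graft_factor m1 A * basis m2" if A_in: "A \<in># m1" for A
  proof -
    obtain m' where "m1 = add_mset A m'" using multi_member_split[OF A_in] by blast
    then have "m1 + m2 - {#A#} + {#B#} = (m1 - {#A#} + {#B#}) + m2" for B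
      by simp
    then show ?thesis by (simp add: graft_factor_def lc_of_list_map_add_basis[symmetric])
  qed
  have right: "graft_factor (m1 + m2) A = basis m1 * graft_factor m2 A" if A_in: "A \<in># m2" for A
  proof -
    obtain m' where "m2 = add_mset A m'" using multi_member_split[OF A_in] by blast
    then have "m1 + m2 - {#A#} + {#B#} = (m2 - {#A#} + {#B#}) + m1" for B
      by simp
    then show ?thesis
      unfolding mult.commute[of "basis m1"] by (simp add: graft_factor_def lc_of_list_map_add_basis[symmetric])
  qed
  have "rho_mono t (m1 + m2) = (\<Sum>A\<in>#m1. graft_factor (m1 + m2) A) + (\<Sum>A\<in>#m2. graft_factor (m1 + m2) A)"
    by (simp add: rho_mono_eq)
  also have "(\<Sum>A\<in>#m1. graft_factor (m1 + m2) A) = (\<Sum>A\<in>#m1. graft_factor m1 A * basis m2)"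
    by (rule arg_cong[where f = sum_mset], rule image_mset_cong, rule left)
  also have "(\<Sum>A\<in>#m2. graft_factor (m1 + m2) A) = (\<Sum>A\<in>#m2. basis m1 * graft_factor m2 A)"
    by (rule arg_cong[where f = sum_mset], rule image_mset_cong, rule right)
  finally show ?thesis
    by (simp only: rho_mono_eq sum_mset_distrib_left sum_mset_distrib_right)
qed

lemma rho_tree_mult: "rho_tree t (f * g :: 'k::comm_ring_1 SPA) = rho_tree t f * g + f * rho_tree t g"
  by (rule bilin_eq[of "\<lambda>f g. rho_tree t (f * g)" "\<lambda>f g. rho_tree t f * g + f * rho_tree t g"])
     ((rule linI; simp add: rho_tree_def distrib_left distrib_right algebra_simps)+,
      simp add: rho_tree_def rho_mono_add)

section \<open>Lie polynomials act as primitive elements\<close>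

inductive lie_hom :: "nat \<Rightarrow> 'k::comm_ring_1 TPT \<Rightarrow> bool" where
  tree: "lie_hom 1 (basis [t])"
| zero: "lie_hom d 0"
| add: "lie_hom d F \<Longrightarrow> lie_hom d G \<Longrightarrow> lie_hom d (F + G)"
| sc: "lie_hom d F \<Longrightarrow> lie_hom d (sc c F)"
| tbr: "lie_hom d1 F \<Longrightarrow> lie_hom d2 G \<Longrightarrow> 0 < d1 \<Longrightarrow> 0 < d2 \<Longrightarrow> lie_hom (d1 + d2) (tbr F G)"

lemma lie_hom_diff: "lie_hom d F \<Longrightarrow> lie_hom d G \<Longrightarrow> lie_hom d (F - G)"
  using lie_hom.add[OF _ lie_hom.sc[of d G "-1"], of F] by (simp add: sc_minus_left)

lemma lie_hom_letters: "lie_hom 1 (lc_of_list (map (\<lambda>s. [s]) L))"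
proof (induction L)
  case (Cons s L)
  then show ?case using lie_hom.add[OF lie_hom.tree[of s]] by simp
qed (simp add: lie_hom.zero)

lemma lie_hom_0_imp_zero: "lie_hom 0 F \<Longrightarrow> F = 0"
  by (induction "0::nat" F rule: lie_hom.induct) auto

definition acts_primitively :: "'k::comm_ring_1 TPT \<Rightarrow> bool" where
  "acts_primitively G \<longleftrightarrow> tmul_derivation (actT G) \<and> (\<forall>d F. lie_hom d F \<longrightarrow> lie_hom d (actT G F))
     \<and> A.composes G \<and> R.composes G \<and> (\<forall>f g. rhoT G (f * g) = rhoT G f * g + f * rhoT G g)"

lemma acts_primitivelyD:
  assumes "acts_primitively G"
  shows "tmul_derivation (actT G)" and "lie_hom d F \<Longrightarrow> lie_hom d (actT G F)"
    and "A.composes G" and "R.composes G" and "rhoT G (f * g) = rhoT G f * g + f * rhoT G g"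
  using assms by (simp_all add: acts_primitively_def)

lemma acts_primitively_zero: "acts_primitively 0"
  by (simp add: acts_primitively_def A.composes_def R.composes_def tmul_derivation_def lie_hom.zero)

lemma acts_primitively_add: "acts_primitively G \<Longrightarrow> acts_primitively H \<Longrightarrow> acts_primitively (G + H)"
  unfolding acts_primitively_def A.composes_def R.composes_def tmul_derivation_def
  by (auto simp: algebra_simps intro: lie_hom.add)

lemma acts_primitively_sc: "acts_primitively G \<Longrightarrow> acts_primitively (sc c G)"
  unfolding acts_primitively_def A.composes_def R.composes_def tmul_derivation_def
  by (auto intro: lie_hom.sc)

lemma acts_primitively_tree: "acts_primitively (basis [t] :: 'k::comm_ring_1 TPT)"
  unfolding acts_primitively_def
proof (intro conjI allI impI)
  have "actT (basis [t] :: 'k TPT) = dT t"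
    by (rule ext) simp
  then show "tmul_derivation (actT (basis [t] :: 'k TPT))"
    by (simp add: tmul_derivation_dT)
  show "lie_hom d (actT (basis [t]) F)" if "lie_hom d F" for d and F :: "'k TPT"
    using that
  proof (induction rule: lie_hom.induct)
    case (tree s)
    then show ?case using lie_hom_letters[of "graft t s"] by (simp add: dw_singleton)
  next
    case (tbr d1 F d2 G)
    then show ?case
      by (simp add: tmul_derivation_tbr[OF lin_dT tmul_derivation_dT] lie_hom.add lie_hom.tbr)
  qed (simp_all add: lie_hom.intros)
  show "A.composes (basis [t])"
    by (simp add: A.composes_def A.ext_tmul_tree)
  show "R.composes (basis [t])"
    by (simp add: R.composes_def R.ext_tmul_tree)
  show "rhoT (basis [t]) (f * g) = rhoT (basis [t]) f * g + f * rhoT (basis [t]) g" for f g :: "'k SPA"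
    by (simp add: rho_tree_mult)
qed

lemma acts_primitively_tbr:
  assumes H: "acts_primitively H" and K: "acts_primitively K"
    and HK: "acts_primitively (actT H K)" and KH: "acts_primitively (actT K H)"
  shows "acts_primitively (tbr H K)"
proof -
  note H' = acts_primitivelyD[OF H] and K' = acts_primitivelyD[OF K]
    and HK' = acts_primitivelyD[OF HK] and KH' = acts_primitivelyD[OF KH]
  have act: "actT (tbr H K) X = actT H (actT K X) - actT (actT H K) X - actT K (actT H X) + actT (actT K H) X" for X
    using A.ext_tbr[OF H'(3) K'(3)] .
  have rho: "rhoT (tbr H K) f = rhoT H (rhoT K f) - rhoT (actT H K) f - rhoT K (rhoT H f) + rhoT (actT K H) f" for f
    using R.ext_tbr[OF H'(4) K'(4)] .
  show ?thesis
    unfolding acts_primitively_def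
  proof (intro conjI allI impI)
    show "tmul_derivation (actT (tbr H K))"
      using H'(1) K'(1) HK'(1) KH'(1) by (simp add: tmul_derivation_def act algebra_simps)
    show "lie_hom d (actT (tbr H K) F)" if "lie_hom d F" for d F
      unfolding act using that by (intro lie_hom.add lie_hom_diff H'(2) K'(2) HK'(2) KH'(2))
    show "A.composes (tbr H K)"
      by (rule A.composes_tbr) (use H' K' HK' KH' in simp_all)
    show "R.composes (tbr H K)"
      by (rule R.composes_tbr) (use H' K' HK' KH' in simp_all)
    show "rhoT (tbr H K) (f * g) = rhoT (tbr H K) f * g + f * rhoT (tbr H K) g" for f g
      unfolding rho by (simp add: H'(5) K'(5) HK'(5) KH'(5) algebra_simps)
  qed
qed

lemma lie_hom_acts_primitively: "lie_hom d (G :: 'k::comm_ring_1 TPT) \<Longrightarrow> acts_primitively G"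
proof (induction d arbitrary: G rule: less_induct)
  case (less d)
  have "acts_primitively G'" if "lie_hom d' G'" "d' \<le> d" for d' and G' :: "'k TPT"
    using that
  proof (induction rule: lie_hom.induct)
    case (tbr d1 H d2 K)
    then have H: "acts_primitively H" and K: "acts_primitively K" by auto
    have "acts_primitively (actT H K)"
      using tbr by (intro less.IH[of d2]) (auto intro: acts_primitivelyD(2)[OF H])
    moreover have "acts_primitively (actT K H)"
      using tbr by (intro less.IH[of d1]) (auto intro: acts_primitivelyD(2)[OF K])
    ultimately show ?case using acts_primitively_tbr H K by blast
  qed (auto intro: acts_primitively_tree acts_primitively_zero acts_primitively_add acts_primitively_sc)
  then show ?case using less.prems by blast
qed

inductive lie_hom_sum :: "'k::comm_ring_1 TPT \<Rightarrow> bool" where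
  zero: "lie_hom_sum 0"
| add: "lie_hom d F \<Longrightarrow> lie_hom_sum G \<Longrightarrow> lie_hom_sum (F + G)"

lemma lie_hom_imp_lie_hom_sum: "lie_hom d F \<Longrightarrow> lie_hom_sum F"
  using lie_hom_sum.add[OF _ lie_hom_sum.zero] by fastforce

lemma lie_hom_sum_add: "lie_hom_sum F \<Longrightarrow> lie_hom_sum G \<Longrightarrow> lie_hom_sum (F + G)"
  by (induction rule: lie_hom_sum.induct) (auto simp: add.assoc intro: lie_hom_sum.intros)

lemma lie_hom_sum_sc: "lie_hom_sum F \<Longrightarrow> lie_hom_sum (sc c F)"
  by (induction rule: lie_hom_sum.induct) (auto intro: lie_hom_sum.intros lie_hom.sc)

lemma lie_hom_sum_tbr_lie_hom: "lie_hom_sum G \<Longrightarrow> lie_hom d F \<Longrightarrow> lie_hom_sum (tbr F G)"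
proof (induction rule: lie_hom_sum.induct)
  case (add d' F' G)
  have "lie_hom (d + d') (tbr F F')"
  proof (cases "d = 0 \<or> d' = 0")
    case True
    then have "F = 0 \<or> F' = 0" using lie_hom_0_imp_zero add by blast
    then show ?thesis by (auto intro: lie_hom.zero)
  next
    case False
    then show ?thesis using add by (intro lie_hom.tbr) auto
  qed
  then show ?case using add by (simp add: lie_hom_sum.add)
qed (simp add: lie_hom_sum.zero)

lemma lie_hom_sum_tbr: "lie_hom_sum F \<Longrightarrow> lie_hom_sum G \<Longrightarrow> lie_hom_sum (tbr F G)"
  by (induction rule: lie_hom_sum.induct) (auto intro: lie_hom_sum.intros lie_hom_sum_add lie_hom_sum_tbr_lie_hom)

lemma lie_pt_imp_lie_hom_sum: "F \<in> lie_pt \<Longrightarrow> lie_hom_sum F"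
  by (induction rule: lie_pt.induct)
     (auto intro: lie_hom_imp_lie_hom_sum lie_hom.tree lie_hom_sum_add lie_hom_sum_sc lie_hom_sum_tbr)

lemma zero_in_lie_pt: "0 \<in> lie_pt"
  using lie_pt.smul[OF lie_pt.gen, of 0] by simp

lemma lie_hom_imp_lie_pt: "lie_hom d F \<Longrightarrow> F \<in> lie_pt"
  by (induction rule: lie_hom.induct) (auto intro: lie_pt.intros zero_in_lie_pt)

lemma lie_pt_acts_primitively: "F \<in> lie_pt \<Longrightarrow> acts_primitively F"
proof -
  assume "F \<in> lie_pt"
  then have "lie_hom_sum F" by (rule lie_pt_imp_lie_hom_sum)
  then show ?thesis
    by (induction rule: lie_hom_sum.induct)
       (auto intro: acts_primitively_zero acts_primitively_add lie_hom_acts_primitively)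
qed

lemma lie_pt_actT: "F \<in> lie_pt \<Longrightarrow> G \<in> lie_pt \<Longrightarrow> actT F G \<in> lie_pt"
proof -
  assume F: "F \<in> lie_pt" and G: "G \<in> lie_pt"
  from G have "lie_hom_sum G" by (rule lie_pt_imp_lie_hom_sum)
  then show ?thesis
  proof (induction rule: lie_hom_sum.induct)
    case (add d G' G'')
    have "lie_hom d (actT F G')"
      using acts_primitivelyD(2)[OF lie_pt_acts_primitively[OF F] add(1)] .
    then show ?case using add by (auto intro: lie_pt.add lie_hom_imp_lie_pt)
  qed (simp add: zero_in_lie_pt)
qed

lemma actT_tbr_right:
  "F \<in> lie_pt \<Longrightarrow> actT F (tbr U V) = tbr (actT F U) V + tbr U (actT F V)"
  using tmul_derivation_tbr[OF A.lin_ext acts_primitivelyD(1)[OF lie_pt_acts_primitively]] .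

lemma actT_tbr_left:
  "F \<in> lie_pt \<Longrightarrow> G \<in> lie_pt \<Longrightarrow>
   actT (tbr F G) X = actT F (actT G X) - actT (actT F G) X - actT G (actT F X) + actT (actT G F) X"
  by (intro A.ext_tbr acts_primitivelyD(3) lie_pt_acts_primitively)

lemma rhoT_tbr:
  "F \<in> lie_pt \<Longrightarrow> G \<in> lie_pt \<Longrightarrow>
   rhoT (tbr F G) f = rhoT F (rhoT G f) - rhoT (actT F G) f - rhoT G (rhoT F f) + rhoT (actT G F) f"
  by (intro R.ext_tbr acts_primitivelyD(4) lie_pt_acts_primitively)

lemma rhoT_mult: "F \<in> lie_pt \<Longrightarrow> rhoT F (f * g) = rhoT F f * g + f * rhoT F g"
  by (intro acts_primitivelyD(5) lie_pt_acts_primitively)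

lemma lext_split_add [simp]:
  "lext (\<lambda>(a, u). P a u + Q a u) X = lext (\<lambda>(a, u). P a u) X + lext (\<lambda>(a, u). Q a u) X"
  by (induction X rule: poly_mapping_induct_single) (simp_all add: split_def)

lemma lext_split_sc [simp]: "lext (\<lambda>(a, u). sc c (P a u)) X = sc c (lext (\<lambda>(a, u). P a u) X)"
  by (induction X rule: poly_mapping_induct_single) (simp_all add: split_def mult.commute)

lemma lext_split_zero [simp]: "lext (\<lambda>(a, u). 0) X = 0"
  by (induction X rule: poly_mapping_induct_single) (simp_all add: split_def)

lemma lext_split_minus [simp]: "lext (\<lambda>(a, u). - P a u) X = - lext (\<lambda>(a, u). P a u) X"
  by (induction X rule: poly_mapping_induct_single) (simp_all add: split_def)

lemma lext_split_diff [simp]: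
  "lext (\<lambda>(a, u). P a u - Q a u) X = lext (\<lambda>(a, u). P a u) X - lext (\<lambda>(a, u). Q a u) X"
  by (induction X rule: poly_mapping_induct_single) (simp_all add: split_def algebra_simps)

lemma tens_basis [simp]: "tens (basis m) (basis w) = basis (m, w)"
  by (simp add: tens_def)

lemma tens_add_left [simp]: "tens (f + g) G = tens f G + tens g G"
  by (simp add: tens_def)

lemma tens_sc_left [simp]: "tens (sc c f) G = sc c (tens f G)"
  by (simp add: tens_def)

lemma tens_minus_left [simp]: "tens (- f) G = - tens f G"
  by (simp add: tens_def)

lemma tens_diff_left [simp]: "tens (f - g) G = tens f G - tens g G"
  by (simp add: tens_def)

lemma tens_add_right [simp]: "tens f (G + H) = tens f G + tens f H"
  by (simp add: tens_def lext_fun_add)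

lemma tens_sc_right [simp]: "tens f (sc c G) = sc c (tens f G)"
  by (simp add: tens_def lext_fun_sc)

lemma tens_zero_right [simp]: "tens f 0 = 0"
  by (simp add: tens_def)

lemma tens_diff_right [simp]: "tens f (G - H) = tens f G - tens f H"
  by (simp add: tens_def lext_fun_diff)

lemma rmult_add_right [simp]: "rmult f (X + Y) = rmult f X + rmult f Y"
  by (simp add: rmult_def)

lemma rmult_sc_right [simp]: "rmult f (sc c X) = sc c (rmult f X)"
  by (simp add: rmult_def)

lemma rmult_zero_right [simp]: "rmult f 0 = 0"
  by (simp add: rmult_def)

lemma rmult_diff_right [simp]: "rmult f (X - Y) = rmult f X - rmult f Y"
  by (simp add: rmult_def)

lemma rmult_basis [simp]: "rmult f (basis (a, w)) = tens (f * basis a) (basis w)"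
  by (simp add: rmult_def)

lemma rmult_add_left [simp]: "rmult (f + g) X = rmult f X + rmult g X"
  by (simp add: rmult_def distrib_right)

lemma rmult_tens: "rmult f (tens \<alpha> U) = tens (f * \<alpha>) U"
  by (rule bilin_eq[of "\<lambda>\<alpha> U. rmult f (tens \<alpha> U)" "\<lambda>\<alpha> U. tens (f * \<alpha>) U"])
     ((rule linI; simp add: distrib_left)+, simp)

lemma rmult_mult: "rmult (f * g) X = rmult f (rmult g X)"
  by (rule lin_eq[where L = "rmult (f * g)"], (rule linI; simp)+) (auto simp: rmult_tens mult.assoc)

lemma rmult_one: "rmult 1 X = X"
  by (rule lin_eq[where L = "rmult 1"], (rule linI; simp)+) auto

lemma sc_eq_rmult: "sc c X = rmult (sc c 1) X"
  by (rule lin_eq[where L = "sc c"], (rule linI; simp add: mult.commute)+) auto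

lemma rhoAPT_add_left [simp]: "rhoAPT (X + Y) g = rhoAPT X g + rhoAPT Y g"
  by (simp add: rhoAPT_def)

lemma rhoAPT_sc_left [simp]: "rhoAPT (sc c X) g = sc c (rhoAPT X g)"
  by (simp add: rhoAPT_def)

lemma rhoAPT_diff_left [simp]: "rhoAPT (X - Y) g = rhoAPT X g - rhoAPT Y g"
  by (simp add: rhoAPT_def)

lemma rhoAPT_basis [simp]: "rhoAPT (basis (a, w)) g = basis a * rhoW w g"
  by (simp add: rhoAPT_def)

lemma lin_rhoAPT: "lin (rhoAPT X)"
  by (rule linI) (simp_all add: rhoAPT_def lin_add[OF R.lin_word_ext] lin_sc[OF R.lin_word_ext] distrib_left)

lemma rhoAPT_add_right [simp]: "rhoAPT X (f + g) = rhoAPT X f + rhoAPT X g"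
  by (rule lin_add[OF lin_rhoAPT])

lemma rhoAPT_sc_right [simp]: "rhoAPT X (sc c f) = sc c (rhoAPT X f)"
  by (rule lin_sc[OF lin_rhoAPT])

lemma rhoAPT_tens: "rhoAPT (tens \<alpha> U) g = \<alpha> * rhoT U g"
  by (rule bilin_eq[of "\<lambda>\<alpha> U. rhoAPT (tens \<alpha> U) g" "\<lambda>\<alpha> U. \<alpha> * rhoT U g"])
     ((rule linI; simp add: distrib_left distrib_right)+, simp)

lemma rhoAPT_rmult: "rhoAPT (rmult f X) g = f * rhoAPT X g"
  by (rule lin_eq[where L = "\<lambda>X. rhoAPT (rmult f X) g"], (rule linI; simp add: distrib_left)+)
     (auto simp: rhoAPT_tens mult.assoc)

lemma brAPT_add_left [simp]: "brAPT (X + Y) Z = brAPT X Z + brAPT Y Z"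
  by (simp add: brAPT_def)

lemma brAPT_sc_left [simp]: "brAPT (sc c X) Z = sc c (brAPT X Z)"
  by (simp add: brAPT_def)

lemma brAPT_zero_left [simp]: "brAPT 0 Z = 0"
  by (simp add: brAPT_def)

lemma brAPT_add_right [simp]: "brAPT X (Y + Z) = brAPT X Y + brAPT X Z"
  by (simp add: brAPT_def)

lemma brAPT_sc_right [simp]: "brAPT X (sc c Y) = sc c (brAPT X Y)"
  by (simp add: brAPT_def)

lemma brAPT_zero_right [simp]: "brAPT X 0 = 0"
  by (simp add: brAPT_def)

lemma brAPT_diff_right [simp]: "brAPT X (Y - Z) = brAPT X Y - brAPT X Z"
  by (simp add: brAPT_def)

lemma brAPT_basis [simp]:
  "brAPT (basis (a, u)) (basis (b, v)) = tens (basis (a + b)) (tbr (basis u) (basis v))"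
  by (simp add: brAPT_def)

lemma brAPT_tens: "brAPT (tens \<alpha> U) (tens \<beta> V) = tens (\<alpha> * \<beta>) (tbr U V)"
proof -
  have basis_case: "brAPT (basis (a, u)) (tens \<beta> V) = tens (basis a * \<beta>) (tbr (basis u) V)" for a u
    by (rule bilin_eq[of "\<lambda>\<beta> V. brAPT (basis (a, u)) (tens \<beta> V)" "\<lambda>\<beta> V. tens (basis a * \<beta>) (tbr (basis u) V)"])
       ((rule linI; simp add: distrib_left)+, simp)
  show ?thesis
    by (rule bilin_eq[of "\<lambda>\<alpha> U. brAPT (tens \<alpha> U) (tens \<beta> V)" "\<lambda>\<alpha> U. tens (\<alpha> * \<beta>) (tbr U V)"])
       ((rule linI; simp add: distrib_left distrib_right)+, simp add: basis_case)
qed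

lemma triAPT_add_left [simp]: "triAPT (X + Y) Z = triAPT X Z + triAPT Y Z"
  by (simp add: triAPT_def)

lemma triAPT_sc_left [simp]: "triAPT (sc c X) Z = sc c (triAPT X Z)"
  by (simp add: triAPT_def)

lemma triAPT_zero_left [simp]: "triAPT 0 Z = 0"
  by (simp add: triAPT_def)

lemma triAPT_diff_left [simp]: "triAPT (X - Y) Z = triAPT X Z - triAPT Y Z"
  by (simp add: triAPT_def)

lemma triAPT_add_right [simp]: "triAPT X (Y + Z) = triAPT X Y + triAPT X Z"
  by (simp add: triAPT_def)

lemma triAPT_sc_right [simp]: "triAPT X (sc c Y) = sc c (triAPT X Y)"
  by (simp add: triAPT_def)

lemma triAPT_zero_right [simp]: "triAPT X 0 = 0"
  by (simp add: triAPT_def)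

lemma triAPT_minus_right [simp]: "triAPT X (- Y) = - triAPT X Y"
  by (simp add: triAPT_def)

lemma triAPT_diff_right [simp]: "triAPT X (Y - Z) = triAPT X Y - triAPT X Z"
  by (simp add: triAPT_def)

lemma triAPT_basis [simp]: "triAPT (basis (a, u)) (basis (b, v)) =
   tens (basis a * rhoW u (basis b)) (basis v) + tens (basis (a + b)) (actT (basis u) (basis v))"
  by (simp add: triAPT_def)

lemma triAPT_tens:
  "triAPT (tens \<alpha> U) (tens \<beta> V) = tens (\<alpha> * rhoT U \<beta>) V + tens (\<alpha> * \<beta>) (actT U V)"
proof -
  have basis_case: "triAPT (basis (a, u)) (tens \<beta> V) =
      tens (basis a * rhoT (basis u) \<beta>) V + tens (basis a * \<beta>) (actT (basis u) V)" for a u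
    by (rule bilin_eq[of "\<lambda>\<beta> V. triAPT (basis (a, u)) (tens \<beta> V)"
          "\<lambda>\<beta> V. tens (basis a * rhoT (basis u) \<beta>) V + tens (basis a * \<beta>) (actT (basis u) V)"])
       ((rule linI; simp add: distrib_left)+, simp)
  show ?thesis
    by (rule bilin_eq[of "\<lambda>\<alpha> U. triAPT (tens \<alpha> U) (tens \<beta> V)"
          "\<lambda>\<alpha> U. tens (\<alpha> * rhoT U \<beta>) V + tens (\<alpha> * \<beta>) (actT U V)"])
       ((rule linI; simp add: distrib_left distrib_right)+, simp add: basis_case)
qed

lemma triAPT_rmult_left: "triAPT (rmult f X) Y = rmult f (triAPT X Y)"
proof -
  have basis_case: "triAPT (rmult f (basis x)) (basis y) = rmult f (triAPT (basis x) (basis y))" for x y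
  proof -
    obtain a u b v where "x = (a, u)" "y = (b, v)" by force
    moreover have "triAPT (rmult f (tens (basis a) (basis u))) (tens (basis b) (basis v))
        = rmult f (triAPT (tens (basis a) (basis u)) (tens (basis b) (basis v)))"
      by (simp only: rmult_tens triAPT_tens rmult_add_right mult.assoc)
    ultimately show ?thesis by (simp only: tens_basis)
  qed
  show ?thesis
    by (rule bilin_eq[of "\<lambda>X Y. triAPT (rmult f X) Y" "\<lambda>X Y. rmult f (triAPT X Y)"])
       ((rule linI; simp)+, rule basis_case)
qed

section \<open>The post-Lie-Rinehart axioms\<close>

lemma APT_minus: "X \<in> APT \<Longrightarrow> - X \<in> APT"
proof (induction rule: APT.induct)
  case (add X Y)
  then have "- X + - Y \<in> APT" by (intro APT.add)
  then show ?case by simp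
next
  case (gen F \<alpha>)
  then have "tens (- \<alpha>) F \<in> APT" by (rule APT.gen)
  then show ?case by simp
qed (simp add: APT.zero)

lemma APT_diff: "X \<in> APT \<Longrightarrow> Y \<in> APT \<Longrightarrow> X - Y \<in> APT"
  using APT.add[OF _ APT_minus, of X Y] by simp

lemma APT_rmult: "X \<in> APT \<Longrightarrow> rmult f X \<in> APT"
  by (induction rule: APT.induct) (auto intro: APT.intros simp: rmult_tens)

lemma APT_brAPT: "X \<in> APT \<Longrightarrow> Y \<in> APT \<Longrightarrow> brAPT X Y \<in> APT"
proof (induction rule: APT.induct)
  case (gen F \<alpha>)
  from gen(2) show ?case
    by (induction rule: APT.induct) (auto intro: APT.intros lie_pt.br gen(1) simp: brAPT_tens)
qed (auto intro: APT.intros)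

lemma APT_triAPT: "X \<in> APT \<Longrightarrow> Y \<in> APT \<Longrightarrow> triAPT X Y \<in> APT"
proof (induction rule: APT.induct)
  case (gen F \<alpha>)
  from gen(2) show ?case
    by (induction rule: APT.induct) (auto intro: APT.intros lie_pt_actT gen(1) simp: triAPT_tens)
qed (auto intro: APT.intros)

lemma APT_dbrAPT: "X \<in> APT \<Longrightarrow> Y \<in> APT \<Longrightarrow> dbrAPT X Y \<in> APT"
  unfolding dbrAPT_def by (intro APT.add APT_diff APT_triAPT APT_brAPT)

lemma additive_zero:
  fixes T :: "'a::ab_group_add \<Rightarrow> 'b::ab_group_add"
  assumes "\<And>X Y. T (X + Y) = T X + T Y"
  shows "T 0 = 0"
  using assms[of 0 0] by simp

lemma APT_eq_induct:
  fixes T S :: "'k::comm_ring_1 APTT \<Rightarrow> 'b::ab_group_add"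
  assumes "X \<in> APT"
    and "\<And>X Y. T (X + Y) = T X + T Y" and "\<And>X Y. S (X + Y) = S X + S Y"
    and "\<And>\<alpha> F. F \<in> lie_pt \<Longrightarrow> T (tens \<alpha> F) = S (tens \<alpha> F)"
  shows "T X = S X"
  using assms(1) by induction (simp_all add: assms(2-4) additive_zero[of T] additive_zero[of S])

lemma APT_eq_induct2:
  fixes T S :: "'k::comm_ring_1 APTT \<Rightarrow> 'k APTT \<Rightarrow> 'b::ab_group_add"
  assumes "X \<in> APT" "Y \<in> APT"
    and "\<And>X1 X2 Y. T (X1 + X2) Y = T X1 Y + T X2 Y" and "\<And>X Y1 Y2. T X (Y1 + Y2) = T X Y1 + T X Y2"
    and "\<And>X1 X2 Y. S (X1 + X2) Y = S X1 Y + S X2 Y" and "\<And>X Y1 Y2. S X (Y1 + Y2) = S X Y1 + S X Y2"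
    and "\<And>\<alpha> F \<beta> G. F \<in> lie_pt \<Longrightarrow> G \<in> lie_pt \<Longrightarrow> T (tens \<alpha> F) (tens \<beta> G) = S (tens \<alpha> F) (tens \<beta> G)"
  shows "T X Y = S X Y"
  using assms(1) by (rule APT_eq_induct) (rule APT_eq_induct[OF assms(2)]; simp add: assms(3-7))+

lemma APT_eq_induct3:
  fixes T S :: "'k::comm_ring_1 APTT \<Rightarrow> 'k APTT \<Rightarrow> 'k APTT \<Rightarrow> 'b::ab_group_add"
  assumes "X \<in> APT" "Y \<in> APT" "Z \<in> APT"
    and "\<And>X1 X2 Y Z. T (X1 + X2) Y Z = T X1 Y Z + T X2 Y Z"
    and "\<And>X Y1 Y2 Z. T X (Y1 + Y2) Z = T X Y1 Z + T X Y2 Z"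
    and "\<And>X Y Z1 Z2. T X Y (Z1 + Z2) = T X Y Z1 + T X Y Z2"
    and "\<And>X1 X2 Y Z. S (X1 + X2) Y Z = S X1 Y Z + S X2 Y Z"
    and "\<And>X Y1 Y2 Z. S X (Y1 + Y2) Z = S X Y1 Z + S X Y2 Z"
    and "\<And>X Y Z1 Z2. S X Y (Z1 + Z2) = S X Y Z1 + S X Y Z2"
    and "\<And>\<alpha> F \<beta> G \<gamma> H. F \<in> lie_pt \<Longrightarrow> G \<in> lie_pt \<Longrightarrow> H \<in> lie_pt \<Longrightarrow>
       T (tens \<alpha> F) (tens \<beta> G) (tens \<gamma> H) = S (tens \<alpha> F) (tens \<beta> G) (tens \<gamma> H)"
  shows "T X Y Z = S X Y Z"
  using assms(1) by (rule APT_eq_induct) (rule APT_eq_induct2[OF assms(2,3)]; simp add: assms(4-10))+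

lemma rhoAPT_mult: "X \<in> APT \<Longrightarrow> rhoAPT X (f * g) = rhoAPT X f * g + f * rhoAPT X g"
  by (rule APT_eq_induct) (simp_all add: algebra_simps rhoAPT_tens rhoT_mult)

lemma rhoAPT_dbrAPT:
  assumes "X \<in> APT" "Y \<in> APT"
  shows "rhoAPT (dbrAPT X Y) g = rhoAPT X (rhoAPT Y g) - rhoAPT Y (rhoAPT X g)"
  using assms by (rule APT_eq_induct2)
     (simp_all add: dbrAPT_def algebra_simps triAPT_tens brAPT_tens rhoAPT_tens rhoT_mult rhoT_tbr)

lemma triAPT_rmult_right:
  assumes "X \<in> APT" "Y \<in> APT"
  shows "triAPT X (rmult f Y) = rmult (rhoAPT X f) Y + rmult f (triAPT X Y)"
  using assms by (rule APT_eq_induct2)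
    (simp_all add: algebra_simps triAPT_tens rmult_tens rhoAPT_tens rhoT_mult)

lemma dbrAPT_rmult_right:
  assumes "X \<in> APT" "Y \<in> APT"
  shows "dbrAPT X (rmult f Y) = rmult (rhoAPT X f) Y + rmult f (dbrAPT X Y)"
  using assms by (rule APT_eq_induct2)
    (simp_all add: dbrAPT_def algebra_simps triAPT_tens brAPT_tens rmult_tens rhoAPT_tens rhoT_mult)

lemma triAPT_flat:
  assumes "X \<in> APT" "Y \<in> APT" "Z \<in> APT"
  shows "triAPT X (triAPT Y Z) - triAPT Y (triAPT X Z) = triAPT (dbrAPT X Y) Z"
  using assms by (rule APT_eq_induct3)
    (simp_all add: dbrAPT_def algebra_simps triAPT_tens brAPT_tens rhoT_mult actT_tbr_left rhoT_tbr)

lemma triAPT_brAPT: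
  assumes "X \<in> APT" "Y \<in> APT" "Z \<in> APT"
  shows "triAPT X (brAPT Y Z) = brAPT (triAPT X Y) Z + brAPT Y (triAPT X Z)"
  using assms by (rule APT_eq_induct3)
    (simp_all add: algebra_simps triAPT_tens brAPT_tens rhoT_mult actT_tbr_right)

lemma brAPT_antisym:
  assumes "X \<in> APT" "Y \<in> APT"
  shows "brAPT Y X = - brAPT X Y"
  using assms by (rule APT_eq_induct2) (simp_all add: brAPT_tens tbr_def mult.commute)

lemma brAPT_self: "X \<in> APT \<Longrightarrow> brAPT X X = 0"
proof (induction rule: APT.induct)
  case (add X Y)
  then show ?case using brAPT_antisym[of X Y] by simp
qed (simp_all add: brAPT_tens tbr_def)

lemma brAPT_jacobi:
  assumes "X \<in> APT" "Y \<in> APT" "Z \<in> APT"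
  shows "brAPT X (brAPT Y Z) + brAPT Y (brAPT Z X) + brAPT Z (brAPT X Y) = 0"
  using assms by (rule APT_eq_induct3) (simp_all add: algebra_simps brAPT_tens tbr_def tmul_assoc)

lemma dbrAPT_add_left [simp]: "dbrAPT (X + Y) Z = dbrAPT X Z + dbrAPT Y Z"
  by (simp add: dbrAPT_def algebra_simps)

lemma dbrAPT_add_right [simp]: "dbrAPT X (Y + Z) = dbrAPT X Y + dbrAPT X Z"
  by (simp add: dbrAPT_def algebra_simps)

lemma dbrAPT_sc_left [simp]: "dbrAPT (sc c X) Z = sc c (dbrAPT X Z)"
  by (simp add: dbrAPT_def)

lemma dbrAPT_sc_right [simp]: "dbrAPT X (sc c Z) = sc c (dbrAPT X Z)"
  by (simp add: dbrAPT_def)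

lemma dbrAPT_self: "X \<in> APT \<Longrightarrow> dbrAPT X X = 0"
  by (simp add: dbrAPT_def brAPT_self)

lemma dbrAPT_dbrAPT:
  assumes "X \<in> APT" "Y \<in> APT" "Z \<in> APT"
  shows "dbrAPT X (dbrAPT Y Z) = triAPT X (triAPT Y Z) - triAPT X (triAPT Z Y) - triAPT Y (triAPT Z X)
     + triAPT Z (triAPT Y X) + brAPT (triAPT X Y) Z + brAPT Y (triAPT X Z) + brAPT X (triAPT Y Z)
     - brAPT X (triAPT Z Y) + brAPT X (brAPT Y Z)"
proof -
  have "triAPT (dbrAPT Y Z) X = triAPT Y (triAPT Z X) - triAPT Z (triAPT Y X)"
    using triAPT_flat[OF assms(2,3,1)] by simp
  then show ?thesis
    by (simp add: dbrAPT_def triAPT_brAPT[OF assms] algebra_simps)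
qed

lemma dbrAPT_jacobi:
  assumes X: "X \<in> APT" and Y: "Y \<in> APT" and Z: "Z \<in> APT"
  shows "dbrAPT X (dbrAPT Y Z) + dbrAPT Y (dbrAPT Z X) + dbrAPT Z (dbrAPT X Y) = 0"
proof -
  note antisym = brAPT_antisym[OF Z APT_triAPT[OF X Y]] brAPT_antisym[OF X APT_triAPT[OF Y Z]]
    brAPT_antisym[OF Y APT_triAPT[OF Z X]]
  have "dbrAPT X (dbrAPT Y Z) + dbrAPT Y (dbrAPT Z X) + dbrAPT Z (dbrAPT X Y)
      = brAPT X (brAPT Y Z) + brAPT Y (brAPT Z X) + brAPT Z (brAPT X Y)"
    unfolding dbrAPT_dbrAPT[OF X Y Z] dbrAPT_dbrAPT[OF Y Z X] dbrAPT_dbrAPT[OF Z X Y] antisym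
    by (simp add: algebra_simps)
  also have "\<dots> = 0"
    using assms by (rule brAPT_jacobi)
  finally show ?thesis .
qed

lemma lie_rinehart_APT: "lie_rinehart sc APT sc rmult dbrAPT rhoAPT"
  unfolding lie_rinehart_def is_derivation_def
  by (auto simp: APT.zero APT.add APT_minus APT_rmult APT_dbrAPT rmult_mult rmult_one
      sc_eq_rmult[symmetric] dbrAPT_self dbrAPT_jacobi dbrAPT_rmult_right
      rhoAPT_mult rhoAPT_rmult rhoAPT_dbrAPT)

lemma is_connection_APT: "is_connection APT rmult rhoAPT triAPT"
  unfolding is_connection_def by (simp add: APT_triAPT triAPT_rmult_left triAPT_rmult_right)

lemma curvature_APT:
  "X \<in> APT \<Longrightarrow> Y \<in> APT \<Longrightarrow> Z \<in> APT \<Longrightarrow> curvature dbrAPT triAPT X Y Z = 0"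
  by (simp add: curvature_def triAPT_flat)

lemma torsion_APT: "torsion dbrAPT triAPT Y Z = - brAPT Y Z"
  by (simp add: torsion_def dbrAPT_def)

lemma triAPT_torsion:
  assumes "X \<in> APT" "Y \<in> APT" "Z \<in> APT"
  shows "triAPT X (torsion dbrAPT triAPT Y Z)
    = torsion dbrAPT triAPT (triAPT X Y) Z + torsion dbrAPT triAPT Y (triAPT X Z)"
  using assms by (simp add: torsion_APT triAPT_brAPT)

theorem mainTheorem4:
  shows "post_lie_rinehart (sc :: 'k::field \<Rightarrow> 'k SPA \<Rightarrow> 'k SPA) (APT :: 'k APTT set) sc rmult
           dbrAPT rhoAPT triAPT"
  unfolding post_lie_rinehart_def
  using lie_rinehart_APT is_connection_APT curvature_APT triAPT_torsion by blast

end
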